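(* Let $\mathscr H_1,\dots,\mathscr H_N$ be null hypotheses with associated random "p-values" $p_1,\dots,p_N$; call $p_l$ null if $\mathscr H_l$ is true. Assume the null p-values are i.i.d., satisfy $\Pr(p_l\le u)\le u$ for all $u\in[0,1]$, and are independent of the non-null p-values. Fix $q\in(0,1]$ and $\mathcal K\subset\{1,\dots,N\}$. Define $$\hat k=\max\Big\{k\in\mathcal K:\frac{\#\{l\le k:p_l>1/2\}}{\#\{l\le k:p_l\le 1/2\}\vee1}\le q\Big\},\qquad \hat k_+=\max\Big\{k\in\mathcal K:\frac{1+\#\{l\le k:p_l>1/2\}}{\#\{l\le k:p_l\le 1/2\}\vee1}\le q\Big\},$$ with $\hat k=0$ (resp. $\hat k_+=0$) if the set is empty, and reject $\mathscr H_k$ for all $k\le\hat k$ (resp. $k\le \hat k_+$) with $p_k\le1/2$. Let $V=\#\{l\le\hat k: p_l\text{ null},\ p_l\le1/2\}$, $R=\#\{l\le\hat k:p_l\le1/2\}$, $V_+=\#\{l\le\hat k_+: p_l\text{ null},\ p_l\le1/2\}$, $R_+=\#\{l\le\hat k_+:p_l\le1/2\}$ (all zero when the corresponding $\hat k$ or $\hat k_+$ is $0$). Then $$\mathbb E\Big[\frac{V}{R+q^{-1}}\Big]\le q\qquad\text{and}\qquad \mathbb E\Big[\frac{V_+}{R_+\vee1}\Big]\le q.$$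
   Context: Indices $l\le k$ range over $\{1,\dots,k\}$; $a\vee b=\max\{a,b\}$. *)

theory Defs
  imports "HOL-Probability.Probability"
begin

definition n_gt :: "(nat \<Rightarrow> real) \<Rightarrow> nat \<Rightarrow> nat" where
  "n_gt x k = card {l \<in> {1..k}. x l > 1/2}"

definition n_le :: "(nat \<Rightarrow> real) \<Rightarrow> nat \<Rightarrow> nat" where
  "n_le x k = card {l \<in> {1..k}. x l \<le> 1/2}"

text \<open>Stopping index; c = 0 gives k-hat, c = 1 gives k-hat-plus. Value 0 if the set is empty.\<close>
definition khat :: "real \<Rightarrow> nat set \<Rightarrow> real \<Rightarrow> (nat \<Rightarrow> real) \<Rightarrow> nat" where
  "khat c K q x = Max ({0} \<union> {k \<in> K. (c + real (n_gt x k)) / real (max (n_le x k) 1) \<le> q})"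

definition Vcnt :: "nat set \<Rightarrow> (nat \<Rightarrow> real) \<Rightarrow> nat \<Rightarrow> nat" where
  "Vcnt H0 x k = card {l \<in> {1..k}. l \<in> H0 \<and> x l \<le> 1/2}"

end

theory Submission
  imports Defs
begin

text \<open>
  Only the pattern of events \<open>p\<^sub>l \<le> 1/2\<close> matters. Conditionally on the non-null p-values,
  the null indicators \<open>[p\<^sub>l \<le> 1/2]\<close> are i.i.d. Bernoulli(\<open>\<rho>\<close>) with \<open>\<rho> \<le> 1/2\<close>, and the
  selection rule at \<open>k\<close> bounds both false discovery proportions by \<open>q\<close> times
  \<open>a\<^sub>k / (1 + b\<^sub>k)\<close>, where \<open>a\<^sub>k\<close>, \<open>b\<^sub>k\<close> count the nulls \<open>l \<le> k\<close> with \<open>p\<^sub>l \<le> 1/2\<close> and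
  \<open>p\<^sub>l > 1/2\<close>. So it suffices that \<open>E[a\<^sub>T / (1 + b\<^sub>T)] \<le> 1\<close> for the largest index \<open>T\<close>
  passing an arbitrary test on the running counts.
  Peeling off the largest null index \<open>h\<close> and conditioning on the total count \<open>c\<close>
  of the \<open>n\<close> nulls, either \<open>T \<ge> h\<close> and the ratio is \<open>c / (1 + n - c)\<close>, or \<open>T < h\<close> and
  induction applies; exchangeability of the indicators given \<open>c\<close> makes the
  resulting recursion telescope to
  \<open>\<Sum>\<^sub>c C(n,c) \<rho>\<^sup>c (1-\<rho>)\<^sup>n\<^sup>-\<^sup>c c/(1+n-c) \<le> (\<rho> + (1-\<rho>))\<^sup>n = 1\<close>.
\<close>

definition count_true :: "nat set \<Rightarrow> (nat \<Rightarrow> bool) \<Rightarrow> nat" where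
  "count_true H u = card {l\<in>H. u l}"

lemma count_true_insert_upd:
  assumes "b \<notin> A" "finite A"
  shows "count_true (insert b A) (u(b:=True)) = Suc (count_true A u)"
    and "count_true (insert b A) (u(b:=False)) = count_true A u"
proof -
  have "{l\<in>insert b A. (u(b:=True)) l} = insert b {l\<in>A. u l}"
    and "{l\<in>insert b A. (u(b:=False)) l} = {l\<in>A. u l}"
    using assms by auto
  then show "count_true (insert b A) (u(b:=True)) = Suc (count_true A u)"
    and "count_true (insert b A) (u(b:=False)) = count_true A u"
    using assms by (simp_all add: count_true_def)
qed

lemma sum_PiE_insert_bool:
  assumes "b \<notin> A" "finite A"
  shows "(\<Sum>u\<in>Pi\<^sub>E (insert b A) (\<lambda>_. UNIV::bool set). F u)
       = (\<Sum>u\<in>Pi\<^sub>E A (\<lambda>_. UNIV). F (u(b:=True)) + F (u(b:=False)))"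
proof -
  have "(\<Sum>u\<in>Pi\<^sub>E (insert b A) (\<lambda>_. UNIV::bool set). F u)
      = (\<Sum>z\<in>UNIV \<times> Pi\<^sub>E A (\<lambda>_. UNIV::bool set). F ((\<lambda>(y, g). g(b := y)) z))"
    unfolding PiE_insert_eq
    by (subst sum.reindex) (use inj_combinator[OF assms(1), of "\<lambda>_. UNIV::bool set"] in auto)
  also have "\<dots> = (\<Sum>y\<in>UNIV. \<Sum>u\<in>Pi\<^sub>E A (\<lambda>_. UNIV::bool set). F (u(b:=y)))"
    by (simp add: sum.cartesian_product case_prod_unfold)
  finally show ?thesis
    by (simp add: UNIV_bool sum.distrib add.commute)
qed

lemma binomial_sum_Suc:
  fixes f :: "nat \<Rightarrow> 'a::comm_semiring_1"
  shows "(\<Sum>c\<le>Suc n. of_nat (Suc n choose c) * f c)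
       = (\<Sum>c\<le>n. of_nat (n choose c) * f (Suc c)) + (\<Sum>c\<le>n. of_nat (n choose c) * f c)"
proof -
  have "(\<Sum>c\<le>Suc n. of_nat (Suc n choose c) * f c)
      = f 0 + (\<Sum>c\<le>n. of_nat (n choose c) * f (Suc c)) + (\<Sum>c\<le>n. of_nat (n choose Suc c) * f (Suc c))"
    by (subst sum.atMost_Suc_shift) (simp add: sum.distrib algebra_simps)
  moreover have "(\<Sum>c\<le>n. of_nat (n choose c) * f c) = f 0 + (\<Sum>c<n. of_nat (n choose Suc c) * f (Suc c))"
    by (simp add: sum.atMost_shift)
  moreover have "(\<Sum>c\<le>n. of_nat (n choose Suc c) * f (Suc c)) = (\<Sum>c<n. of_nat (n choose Suc c) * f (Suc c))"
    by (simp add: lessThan_Suc_atMost[symmetric] binomial_eq_0)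
  ultimately show ?thesis by (simp add: algebra_simps)
qed

lemma sum_PiE_bool_count_true:
  fixes f :: "nat \<Rightarrow> real"
  assumes "finite H"
  shows "(\<Sum>u\<in>Pi\<^sub>E H (\<lambda>_. UNIV::bool set). f (count_true H u))
       = (\<Sum>c\<le>card H. real (card H choose c) * f c)"
  using assms
proof (induction H arbitrary: f rule: finite_induct)
  case empty
  then show ?case by (simp add: count_true_def)
next
  case (insert b A)
  have "(\<Sum>u\<in>Pi\<^sub>E (insert b A) (\<lambda>_. UNIV). f (count_true (insert b A) u))
     = (\<Sum>u\<in>Pi\<^sub>E A (\<lambda>_. UNIV). f (Suc (count_true A u))) + (\<Sum>u\<in>Pi\<^sub>E A (\<lambda>_. UNIV). f (count_true A u))"
    using insert by (simp add: sum_PiE_insert_bool count_true_insert_upd sum.distrib)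
  also have "\<dots> = (\<Sum>c\<le>card A. real (card A choose c) * f (Suc c)) + (\<Sum>c\<le>card A. real (card A choose c) * f c)"
    using insert.IH[of "\<lambda>c. f (Suc c)"] insert.IH[of f] by simp
  also have "\<dots> = (\<Sum>c\<le>Suc (card A). real (Suc (card A) choose c) * f c)"
    by (rule binomial_sum_Suc[symmetric])
  finally show ?case using insert by simp
qed

lemma prod_bool_weight:
  fixes \<rho> :: real
  assumes "finite H"
  shows "(\<Prod>l\<in>H. if u l then \<rho> else 1 - \<rho>) = \<rho> ^ count_true H u * (1 - \<rho>) ^ (card H - count_true H u)"
proof -
  have "H \<inter> {l. u l} = {l\<in>H. u l}" and "H \<inter> - {l. u l} = H - {l\<in>H. u l}" by auto
  moreover have "(\<Prod>l\<in>H. if u l then \<rho> else 1 - \<rho>) = (\<Prod>l\<in>H \<inter> {l. u l}. \<rho>) * (\<Prod>l\<in>H \<inter> - {l. u l}. 1 - \<rho>)"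
    using assms by (rule prod.If_cases)
  ultimately show ?thesis
    using assms by (simp add: count_true_def card_Diff_subset)
qed

text \<open>\<open>stop_ratio n c\<close> is \<open>#true / (1 + #false)\<close> over \<open>n\<close> indicators of which \<open>c\<close> are true.\<close>

definition stop_ratio :: "nat \<Rightarrow> nat \<Rightarrow> real" where
  "stop_ratio n c = real c / (1 + real n - real c)"

lemma binomial_times_stop_ratio_Suc:
  assumes "d < n"
  shows "real (n choose Suc d) * stop_ratio n (Suc d) = real (n choose d)"
proof -
  have "Suc d * (n choose Suc d) = (n - d) * (n choose d)"
    by (metis binomial_absorption binomial_absorb_comp)
  then have "real (Suc d) * real (n choose Suc d) = (real n - real d) * real (n choose d)"
    using assms by (metis of_nat_diff less_imp_le of_nat_mult)
  then show ?thesis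
    using assms by (simp add: stop_ratio_def field_simps)
qed

lemma binomial_stop_ratio_Suc_ge:
  assumes "c \<le> Suc n"
  shows "(if c = 0 then 0 else real (n choose (c - 1)) * stop_ratio n (c - 1))
         + real (n choose c) * stop_ratio n c
       \<le> real (Suc n choose c) * stop_ratio (Suc n) c"
proof (cases c)
  case 0
  then show ?thesis by (simp add: stop_ratio_def)
next
  case (Suc d)
  consider "d = n" | "d < n" using Suc assms by linarith
  then show ?thesis
  proof cases
    case 1
    then show ?thesis using Suc by (simp add: stop_ratio_def)
  next
    case 2
    have "real (Suc n choose Suc d) * real (Suc d) = real (Suc n) * real (n choose d)"
      using Suc_times_binomial_eq[of n d] by (metis of_nat_mult)
    then have "real (Suc n choose Suc d) * stop_ratio (Suc n) (Suc d)
        = real (n choose d) * stop_ratio n d + real (n choose d)"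
      using 2 by (simp add: stop_ratio_def field_simps)
    then show ?thesis
      using Suc binomial_times_stop_ratio_Suc[OF 2] by simp
  qed
qed

definition count_upto :: "nat set \<Rightarrow> (nat \<Rightarrow> bool) \<Rightarrow> nat \<Rightarrow> nat" where
  "count_upto H u k = card {l\<in>H. l \<le> k \<and> u l}"

definition count_false_upto :: "nat set \<Rightarrow> (nat \<Rightarrow> bool) \<Rightarrow> nat \<Rightarrow> nat" where
  "count_false_upto H u k = card {l\<in>H. l \<le> k \<and> \<not> u l}"

definition last_pass ::
    "nat set \<Rightarrow> (nat \<Rightarrow> nat \<Rightarrow> nat \<Rightarrow> bool) \<Rightarrow> nat set \<Rightarrow> (nat \<Rightarrow> bool) \<Rightarrow> nat" where
  "last_pass K P H u = Max (insert 0 {k\<in>K. P k (count_upto H u k) (count_false_upto H u k)})"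

definition last_pass_ratio ::
    "nat set \<Rightarrow> (nat \<Rightarrow> nat \<Rightarrow> nat \<Rightarrow> bool) \<Rightarrow> nat set \<Rightarrow> (nat \<Rightarrow> bool) \<Rightarrow> real" where
  "last_pass_ratio K P H u =
     real (count_upto H u (last_pass K P H u)) / (1 + real (count_false_upto H u (last_pass K P H u)))"

definition binomial_stop_bound :: "(nat \<Rightarrow> real) \<Rightarrow> nat \<Rightarrow> real" where
  "binomial_stop_bound g n = (\<Sum>c\<le>n. g c * (real (n choose c) * stop_ratio n c))"

lemma last_pass_ratio_nonneg: "0 \<le> last_pass_ratio K P H u"
  unfolding last_pass_ratio_def by simp

lemma count_true_le_card: "finite H \<Longrightarrow> count_true H u \<le> card H"
  unfolding count_true_def by (intro card_mono) auto

lemma count_upto_all: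
  assumes "finite H" "\<forall>l\<in>H. l \<le> k"
  shows "count_upto H u k = count_true H u"
    and "count_false_upto H u k = card H - count_true H u"
proof -
  have "{l\<in>H. l \<le> k \<and> u l} = {l\<in>H. u l}" and "{l\<in>H. l \<le> k \<and> \<not> u l} = H - {l\<in>H. u l}"
    using assms by auto
  then show "count_upto H u k = count_true H u" "count_false_upto H u k = card H - count_true H u"
    unfolding count_upto_def count_false_upto_def count_true_def
    using assms by (simp_all add: card_Diff_subset)
qed

lemma count_upto_insert_above:
  assumes "h \<notin> A" "k < h"
  shows "count_upto (insert h A) (u(h:=x)) k = count_upto A u k"
    and "count_false_upto (insert h A) (u(h:=x)) k = count_false_upto A u k"
proof -
  have "{l\<in>insert h A. l \<le> k \<and> (u(h:=x)) l} = {l\<in>A. l \<le> k \<and> u l}"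
    and "{l\<in>insert h A. l \<le> k \<and> \<not> (u(h:=x)) l} = {l\<in>A. l \<le> k \<and> \<not> u l}"
    using assms by auto
  then show "count_upto (insert h A) (u(h:=x)) k = count_upto A u k"
    and "count_false_upto (insert h A) (u(h:=x)) k = count_false_upto A u k"
    by (simp_all add: count_upto_def count_false_upto_def)
qed

lemma last_pass_cases:
  assumes "finite K"
  shows "last_pass K P H u = 0 \<or>
    (last_pass K P H u \<in> K \<and>
     P (last_pass K P H u) (count_upto H u (last_pass K P H u)) (count_false_upto H u (last_pass K P H u)))"
proof -
  have "last_pass K P H u \<in> insert 0 {k\<in>K. P k (count_upto H u k) (count_false_upto H u k)}"
    unfolding last_pass_def using assms by (intro Max_in) auto
  then show ?thesis by auto
qed

lemma last_pass_ge:
  assumes "finite K" "k \<in> K" "P k (count_upto H u k) (count_false_upto H u k)"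
  shows "k \<le> last_pass K P H u"
  unfolding last_pass_def using assms by (intro Max_ge) auto

text \<open>
  Removing the largest index \<open>h\<close>: either some \<open>k \<ge> h\<close> passes, and then all indicators are
  counted, or the last pass happens before \<open>h\<close> and is that of the restricted test on \<open>A\<close>.
\<close>

lemma last_pass_ratio_insert_max:
  fixes P :: "nat \<Rightarrow> nat \<Rightarrow> nat \<Rightarrow> bool"
  assumes fin: "finite A" "finite K" and hA: "\<forall>a\<in>A. a < h" and h0: "0 < h"
  defines "E \<equiv> \<lambda>c. \<exists>k\<in>K. h \<le> k \<and> P k c (Suc (card A) - c)"
  shows "last_pass_ratio K P (insert h A) (u(h:=x)) =
    (if E (count_true (insert h A) (u(h:=x)))
     then stop_ratio (Suc (card A)) (count_true (insert h A) (u(h:=x)))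
     else last_pass_ratio K (\<lambda>k a b. k < h \<and> P k a b) A u)"
proof -
  let ?H = "insert h A" and ?v = "u(h:=x)" and ?P' = "\<lambda>k a b. k < h \<and> P k a b"
  have hnA: "h \<notin> A" using hA by auto
  have cH: "card ?H = Suc (card A)" using hnA fin by simp
  have cle: "count_true ?H ?v \<le> Suc (card A)" using count_true_le_card[of ?H] fin cH by simp
  have top: "count_upto ?H ?v k = count_true ?H ?v"
    "count_false_upto ?H ?v k = Suc (card A) - count_true ?H ?v" if "h \<le> k" for k
  proof -
    have "\<forall>l\<in>?H. l \<le> k" using hA that by auto
    then show "count_upto ?H ?v k = count_true ?H ?v"
      "count_false_upto ?H ?v k = Suc (card A) - count_true ?H ?v"
      using count_upto_all[of ?H k ?v] fin cH by auto
  qed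
  show ?thesis
  proof (cases "E (count_true ?H ?v)")
    case True
    then obtain k where k: "k \<in> K" "h \<le> k" "P k (count_true ?H ?v) (Suc (card A) - count_true ?H ?v)"
      unfolding E_def by blast
    have "k \<le> last_pass K P ?H ?v"
      using k top[OF k(2)] by (intro last_pass_ge fin) auto
    then have "h \<le> last_pass K P ?H ?v" using k by simp
    then show ?thesis
      unfolding last_pass_ratio_def stop_ratio_def top[OF \<open>h \<le> last_pass K P ?H ?v\<close>]
      using True cle by (simp add: of_nat_diff)
  next
    case False
    have "P k (count_upto ?H ?v k) (count_false_upto ?H ?v k) \<longleftrightarrow>
          ?P' k (count_upto A u k) (count_false_upto A u k)" if "k \<in> K" for k
      using False top that count_upto_insert_above[OF hnA, of k u x] unfolding E_def
      by (cases "h \<le> k") auto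
    then have same: "last_pass K P ?H ?v = last_pass K ?P' A u"
      unfolding last_pass_def by (metis (no_types, lifting) mem_Collect_eq)
    have "last_pass K ?P' A u < h"
      using last_pass_cases[OF fin(2), of ?P' A u] h0 by auto
    then show ?thesis
      unfolding last_pass_ratio_def same using False count_upto_insert_above[OF hnA] by simp
  qed
qed

lemma binomial_stop_bound_Suc_ge:
  fixes g :: "nat \<Rightarrow> real" and E :: "nat \<Rightarrow> bool"
  assumes g: "\<And>c. 0 \<le> g c"
  shows "(\<Sum>c\<le>n. real (n choose c) * ((if E (Suc c) then g (Suc c) * stop_ratio (Suc n) (Suc c) else 0)
                                   + (if E c then g c * stop_ratio (Suc n) c else 0)))
       + binomial_stop_bound (\<lambda>c. if E (Suc c) then 0 else g (Suc c)) n
       + binomial_stop_bound (\<lambda>c. if E c then 0 else g c) n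
       \<le> binomial_stop_bound g (Suc n)"
proof -
  define X where "X c = (if E c then g c * stop_ratio (Suc n) c else g c * stop_ratio n (c - 1))" for c
  define Y where "Y c = (if E c then g c * stop_ratio (Suc n) c else g c * stop_ratio n c)" for c
  have "(\<Sum>c\<le>n. real (n choose c) * ((if E (Suc c) then g (Suc c) * stop_ratio (Suc n) (Suc c) else 0)
                                   + (if E c then g c * stop_ratio (Suc n) c else 0)))
       + binomial_stop_bound (\<lambda>c. if E (Suc c) then 0 else g (Suc c)) n
       + binomial_stop_bound (\<lambda>c. if E c then 0 else g c) n
      = (\<Sum>c\<le>n. real (n choose c) * X (Suc c)) + (\<Sum>c\<le>n. real (n choose c) * Y c)"
    unfolding binomial_stop_bound_def X_def Y_def
    by (simp only: sum.distrib[symmetric]) (intro sum.cong refl, auto simp: algebra_simps)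
  also have "\<dots> = (\<Sum>c\<le>Suc n. (if c = 0 then 0 else real (n choose (c - 1)) * X c) + real (n choose c) * Y c)"
  proof -
    have "(\<Sum>c\<le>n. real (n choose c) * X (Suc c))
        = (\<Sum>c\<le>Suc n. (if c = 0 then 0 else real (n choose (c - 1)) * X c))"
      by (subst sum.atMost_Suc_shift) simp
    moreover have "(\<Sum>c\<le>n. real (n choose c) * Y c) = (\<Sum>c\<le>Suc n. real (n choose c) * Y c)"
      by simp
    ultimately show ?thesis by (simp add: sum.distrib)
  qed
  also have "\<dots> \<le> (\<Sum>c\<le>Suc n. g c * (real (Suc n choose c) * stop_ratio (Suc n) c))"
  proof (rule sum_mono)
    fix c assume "c \<in> {..Suc n}"
    then have c: "c \<le> Suc n" by simp
    show "(if c = 0 then 0 else real (n choose (c - 1)) * X c) + real (n choose c) * Y c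
        \<le> g c * (real (Suc n choose c) * stop_ratio (Suc n) c)"
    proof (cases "E c")
      case True
      have "(if c = 0 then 0 else real (n choose (c - 1)) * X c) + real (n choose c) * Y c
          = g c * (((if c = 0 then 0 else real (n choose (c - 1))) + real (n choose c)) * stop_ratio (Suc n) c)"
        unfolding X_def Y_def using True by (simp add: algebra_simps)
      also have "(if c = 0 then 0 else real (n choose (c - 1))) + real (n choose c) = real (Suc n choose c)"
        by (cases c) simp_all
      finally show ?thesis by simp
    next
      case False
      have "(if c = 0 then 0 else real (n choose (c - 1)) * X c) + real (n choose c) * Y c
          = g c * ((if c = 0 then 0 else real (n choose (c - 1)) * stop_ratio n (c - 1))
                   + real (n choose c) * stop_ratio n c)"
        unfolding X_def Y_def using False by (simp add: algebra_simps)
      also have "\<dots> \<le> g c * (real (Suc n choose c) * stop_ratio (Suc n) c)"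
        using binomial_stop_ratio_Suc_ge[OF c] g by (intro mult_left_mono) auto
      finally show ?thesis .
    qed
  qed
  finally show ?thesis unfolding binomial_stop_bound_def .
qed

lemma sum_last_pass_ratio_le:
  assumes "finite H" "finite K" "\<forall>l\<in>H. 0 < l" "\<And>c. 0 \<le> g c"
  shows "(\<Sum>u\<in>Pi\<^sub>E H (\<lambda>_. UNIV). g (count_true H u) * last_pass_ratio K P H u)
       \<le> binomial_stop_bound g (card H)"
  using assms(1,3,4)
proof (induction H arbitrary: g P rule: finite_linorder_max_induct)
  case empty
  then show ?case
    by (simp add: last_pass_ratio_def count_upto_def binomial_stop_bound_def stop_ratio_def)
next
  case (insert h A)
  let ?H = "insert h A" and ?n = "card A" and ?P' = "\<lambda>k a b. k < h \<and> P k a b"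
  define E where "E c \<longleftrightarrow> (\<exists>k\<in>K. h \<le> k \<and> P k c (Suc ?n - c))" for c
  have hnA: "h \<notin> A" using insert by auto
  have step: "last_pass_ratio K P ?H (u(h:=x)) =
     (if E (count_true ?H (u(h:=x))) then stop_ratio (Suc ?n) (count_true ?H (u(h:=x)))
      else last_pass_ratio K ?P' A u)" for u x
    unfolding E_def by (rule last_pass_ratio_insert_max) (use insert assms(2) in auto)
  define gT where "gT c = (if E (Suc c) then g (Suc c) * stop_ratio (Suc ?n) (Suc c) else 0)" for c
  define gF where "gF c = (if E c then g c * stop_ratio (Suc ?n) c else 0)" for c
  define g1 where "g1 c = (if E (Suc c) then 0 else g (Suc c))" for c
  define g0 where "g0 c = (if E c then 0 else g c)" for c
  have "(\<Sum>u\<in>Pi\<^sub>E ?H (\<lambda>_. UNIV). g (count_true ?H u) * last_pass_ratio K P ?H u)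
      = (\<Sum>u\<in>Pi\<^sub>E A (\<lambda>_. UNIV). (gT (count_true A u) + gF (count_true A u))
          + g1 (count_true A u) * last_pass_ratio K ?P' A u
          + g0 (count_true A u) * last_pass_ratio K ?P' A u)"
    unfolding sum_PiE_insert_bool[OF hnA insert(1)]
    by (intro sum.cong refl)
       (simp add: step count_true_insert_upd[OF hnA insert(1)] gT_def gF_def g1_def g0_def algebra_simps)
  also have "\<dots> = (\<Sum>u\<in>Pi\<^sub>E A (\<lambda>_. UNIV). gT (count_true A u) + gF (count_true A u))
        + (\<Sum>u\<in>Pi\<^sub>E A (\<lambda>_. UNIV). g1 (count_true A u) * last_pass_ratio K ?P' A u)
        + (\<Sum>u\<in>Pi\<^sub>E A (\<lambda>_. UNIV). g0 (count_true A u) * last_pass_ratio K ?P' A u)"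
    by (simp add: sum.distrib)
  also have "\<dots> \<le> (\<Sum>c\<le>?n. real (?n choose c) * (gT c + gF c))
        + binomial_stop_bound g1 ?n + binomial_stop_bound g0 ?n"
  proof -
    have "\<forall>l\<in>A. 0 < l" using insert.prems by auto
    then have "(\<Sum>u\<in>Pi\<^sub>E A (\<lambda>_. UNIV). g1 (count_true A u) * last_pass_ratio K ?P' A u)
               \<le> binomial_stop_bound g1 ?n"
        and "(\<Sum>u\<in>Pi\<^sub>E A (\<lambda>_. UNIV). g0 (count_true A u) * last_pass_ratio K ?P' A u)
               \<le> binomial_stop_bound g0 ?n"
      using insert.prems by (intro insert.IH; simp add: g1_def g0_def)+
    then show ?thesis
      using sum_PiE_bool_count_true[OF insert(1), of "\<lambda>c. gT c + gF c"] by linarith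
  qed
  also have "\<dots> \<le> binomial_stop_bound g (Suc ?n)"
    unfolding gT_def gF_def g1_def g0_def
    by (rule binomial_stop_bound_Suc_ge) (use insert.prems in auto)
  finally show ?case using hnA insert(1) by simp
qed

lemma binomial_stop_bound_Bernoulli_le_1:
  fixes \<rho> :: real
  assumes "0 \<le> \<rho>" "\<rho> \<le> 1/2"
  shows "binomial_stop_bound (\<lambda>c. \<rho> ^ c * (1 - \<rho>) ^ (n - c)) n \<le> 1"
proof -
  define w where "w d = real (n choose d) * \<rho> ^ d * (1 - \<rho>) ^ (n - d)" for d
  have "binomial_stop_bound (\<lambda>c. \<rho> ^ c * (1 - \<rho>) ^ (n - c)) n \<le> (\<Sum>c\<le>n. if c = 0 then 0 else w (c - 1))"
    unfolding binomial_stop_bound_def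
  proof (rule sum_mono)
    fix c assume "c \<in> {..n}"
    show "\<rho> ^ c * (1 - \<rho>) ^ (n - c) * (real (n choose c) * stop_ratio n c) \<le> (if c = 0 then 0 else w (c - 1))"
    proof (cases c)
      case 0
      then show ?thesis by (simp add: stop_ratio_def)
    next
      case (Suc d)
      with \<open>c \<in> {..n}\<close> have dn: "d < n" by simp
      have "\<rho> ^ c * (1 - \<rho>) ^ (n - c) = \<rho> ^ d * (1 - \<rho>) ^ (n - Suc d) * \<rho>"
        using Suc by simp
      also have "\<dots> \<le> \<rho> ^ d * (1 - \<rho>) ^ (n - Suc d) * (1 - \<rho>)"
        using assms by (intro mult_left_mono) auto
      also have "\<dots> = \<rho> ^ d * (1 - \<rho>) ^ (n - d)"
        using dn by (simp add: Suc_diff_Suc[symmetric])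
      finally have "\<rho> ^ c * (1 - \<rho>) ^ (n - c) * real (n choose d) \<le> \<rho> ^ d * (1 - \<rho>) ^ (n - d) * real (n choose d)"
        by (intro mult_right_mono) auto
      then show ?thesis
        using Suc binomial_times_stop_ratio_Suc[OF dn] by (simp add: w_def algebra_simps)
    qed
  qed
  also have "\<dots> \<le> (\<Sum>d\<le>n. w d)"
  proof (cases n)
    case (Suc m)
    have "(\<Sum>c\<le>n. if c = 0 then 0 else w (c - 1)) = (\<Sum>d\<le>m. w d)"
      unfolding Suc by (subst sum.atMost_Suc_shift) simp
    also have "\<dots> \<le> (\<Sum>d\<le>n. w d)"
      unfolding Suc w_def using assms by (intro sum_mono2) auto
    finally show ?thesis .
  qed (use assms in \<open>simp add: w_def\<close>)
  also have "\<dots> = (\<rho> + (1 - \<rho>)) ^ n"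
    unfolding w_def by (subst binomial_ring) (simp add: algebra_simps)
  finally show ?thesis by simp
qed

theorem sum_Bernoulli_last_pass_ratio_le_1:
  fixes \<rho> :: real
  assumes "finite H" "finite K" "\<forall>l\<in>H. 0 < l" "0 \<le> \<rho>" "\<rho> \<le> 1/2"
  shows "(\<Sum>u\<in>Pi\<^sub>E H (\<lambda>_. UNIV). (\<Prod>l\<in>H. if u l then \<rho> else 1 - \<rho>) * last_pass_ratio K P H u) \<le> 1"
proof -
  have "(\<Sum>u\<in>Pi\<^sub>E H (\<lambda>_. UNIV). (\<Prod>l\<in>H. if u l then \<rho> else 1 - \<rho>) * last_pass_ratio K P H u)
     = (\<Sum>u\<in>Pi\<^sub>E H (\<lambda>_. UNIV). (\<lambda>c. \<rho> ^ c * (1 - \<rho>) ^ (card H - c)) (count_true H u) * last_pass_ratio K P H u)"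
    by (simp only: prod_bool_weight[OF assms(1)])
  also have "\<dots> \<le> binomial_stop_bound (\<lambda>c. \<rho> ^ c * (1 - \<rho>) ^ (card H - c)) (card H)"
    by (rule sum_last_pass_ratio_le) (use assms in auto)
  also have "\<dots> \<le> 1"
    by (rule binomial_stop_bound_Bernoulli_le_1) (use assms in auto)
  finally show ?thesis .
qed

lemma fdp_le_null_ratio:
  fixes a a' b b' :: nat and q :: real
  assumes "q > 0" "real (b + b') / real (max (a + a') 1) \<le> q"
  shows "real a / (real (a + a') + 1 / q) \<le> q * (real a / (1 + real b))"
proof (cases "a = 0")
  case True
  then show ?thesis by simp
next
  case False
  then have m: "max (a + a') 1 = a + a'" by simp
  have pos: "real (a + a') > 0" using False by simp
  have "real b \<le> q * real (a + a')" using assms(2) pos unfolding m by (simp add: divide_le_eq)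
  then have h: "1 + real b \<le> q * (real (a + a') + 1 / q)" using assms(1) by (simp add: algebra_simps)
  have "1 / q > 0" using assms(1) by simp
  then have X: "real (a + a') + 1 / q > 0" using pos by linarith
  have "real a * (1 + real b) \<le> real a * (q * (real (a + a') + 1 / q))"
    using h by (intro mult_left_mono) auto
  then show ?thesis using X assms(1) by (simp add: field_simps)
qed

lemma fdp_plus_le_null_ratio:
  fixes a a' b b' :: nat and q :: real
  assumes "q > 0" "(1 + real (b + b')) / real (max (a + a') 1) \<le> q"
  shows "real a / real (max (a + a') 1) \<le> q * (real a / (1 + real b))"
proof (cases "a = 0")
  case True
  then show ?thesis by simp
next
  case False
  then have m: "max (a + a') 1 = a + a'" by simp
  have pos: "real (a + a') > 0" using False by simp
  have "1 + real (b + b') \<le> q * real (a + a')" using assms(2) pos unfolding m by (simp add: divide_le_eq)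
  then have h: "1 + real b \<le> q * real (a + a')" by simp
  have "real a * (1 + real b) \<le> real a * (q * real (a + a'))"
    using h by (intro mult_left_mono) auto
  then show ?thesis using pos unfolding m by (simp add: field_simps)
qed

text \<open>A p-value vector realising the pattern \<open>u\<close> on the nulls and \<open>t\<close> on the non-nulls.\<close>

definition pattern_point :: "nat set \<Rightarrow> (nat \<Rightarrow> bool) \<Rightarrow> (nat \<Rightarrow> bool) \<Rightarrow> nat \<Rightarrow> real" where
  "pattern_point H0 u t = (\<lambda>l. if (if l \<in> H0 then u l else t l) then 0 else 1)"

lemma pattern_point_le_half: "(pattern_point H0 u t l \<le> 1/2) = (if l \<in> H0 then u l else t l)"
  by (simp add: pattern_point_def)

lemma counts_pattern_point:
  assumes H0: "H0 \<subseteq> {1..N}" and k: "k \<le> N"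
  defines "R \<equiv> {1..N} - H0"
  shows "n_le (pattern_point H0 u t) k = count_upto H0 u k + count_upto R t k"
    and "n_gt (pattern_point H0 u t) k = count_false_upto H0 u k + count_false_upto R t k"
    and "Vcnt H0 (pattern_point H0 u t) k = count_upto H0 u k"
proof -
  have fin: "finite H0" "finite R" using H0 finite_subset unfolding R_def by auto
  have "{l\<in>{1..k}. pattern_point H0 u t l \<le> 1/2} = {l\<in>H0. l \<le> k \<and> u l} \<union> {l\<in>R. l \<le> k \<and> t l}"
    using H0 k unfolding R_def pattern_point_le_half by auto
  moreover have "card ({l\<in>H0. l \<le> k \<and> u l} \<union> {l\<in>R. l \<le> k \<and> t l})
      = count_upto H0 u k + count_upto R t k"
    unfolding count_upto_def using fin by (intro card_Un_disjoint) (auto simp: R_def)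
  ultimately show "n_le (pattern_point H0 u t) k = count_upto H0 u k + count_upto R t k"
    unfolding n_le_def by simp
  have "{l\<in>{1..k}. pattern_point H0 u t l > 1/2}
      = {l\<in>H0. l \<le> k \<and> \<not> u l} \<union> {l\<in>R. l \<le> k \<and> \<not> t l}"
    using H0 k unfolding R_def by (auto simp: pattern_point_def)
  moreover have "card ({l\<in>H0. l \<le> k \<and> \<not> u l} \<union> {l\<in>R. l \<le> k \<and> \<not> t l})
      = count_false_upto H0 u k + count_false_upto R t k"
    unfolding count_false_upto_def using fin by (intro card_Un_disjoint) (auto simp: R_def)
  ultimately show "n_gt (pattern_point H0 u t) k = count_false_upto H0 u k + count_false_upto R t k"
    unfolding n_gt_def by simp
  have "{l\<in>{1..k}. l \<in> H0 \<and> pattern_point H0 u t l \<le> 1/2} = {l\<in>H0. l \<le> k \<and> u l}"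
    using H0 unfolding pattern_point_le_half by auto
  then show "Vcnt H0 (pattern_point H0 u t) k = count_upto H0 u k"
    unfolding Vcnt_def count_upto_def by simp
qed

definition khat_null_test ::
    "real \<Rightarrow> real \<Rightarrow> nat set \<Rightarrow> (nat \<Rightarrow> bool) \<Rightarrow> nat \<Rightarrow> nat \<Rightarrow> nat \<Rightarrow> bool" where
  "khat_null_test c q R t k a b \<longleftrightarrow>
     (c + real (b + count_false_upto R t k)) / real (max (a + count_upto R t k) 1) \<le> q"

lemma khat_pattern_point:
  assumes H0: "H0 \<subseteq> {1..N}" and K: "K \<subseteq> {1..N}"
  defines "R \<equiv> {1..N} - H0"
  shows "khat c K q (pattern_point H0 u t) = last_pass K (khat_null_test c q R t) H0 u"
proof -
  have "{k \<in> K. (c + real (n_gt (pattern_point H0 u t) k)) / real (max (n_le (pattern_point H0 u t) k) 1) \<le> q}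
      = {k\<in>K. khat_null_test c q R t k (count_upto H0 u k) (count_false_upto H0 u k)}"
    using K counts_pattern_point[OF H0, of _ u t] unfolding khat_null_test_def R_def
    by (intro Collect_cong) (auto simp: add.commute)
  then show ?thesis unfolding khat_def last_pass_def by simp
qed

lemma fdp_pattern_point_le_last_pass_ratio:
  fixes D :: "nat \<Rightarrow> real" and u t :: "nat \<Rightarrow> bool"
  assumes H0: "H0 \<subseteq> {1..N}" and K: "K \<subseteq> {1..N}" and q: "0 < q"
    and D: "\<And>n. 0 \<le> D n"
    and fdp_le: "\<And>a a' b b'. (c + real (b + b')) / real (max (a + a') 1) \<le> q \<Longrightarrow>
                    real a / D (a + a') \<le> q * (real a / (1 + real b))"
  defines "x \<equiv> pattern_point H0 u t"
  shows "real (Vcnt H0 x (khat c K q x)) / D (n_le x (khat c K q x))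
       \<le> q * last_pass_ratio K (khat_null_test c q ({1..N} - H0) t) H0 u"
proof -
  let ?P = "khat_null_test c q ({1..N} - H0) t"
  let ?T = "last_pass K ?P H0 u"
  have T: "khat c K q x = ?T"
    unfolding x_def by (rule khat_pattern_point[OF H0 K])
  have "finite K" using K finite_subset by blast
  from last_pass_cases[OF this, of ?P H0 u] show ?thesis
  proof
    assume "?T = 0"
    moreover have "Vcnt H0 x 0 = 0"
      unfolding x_def counts_pattern_point(3)[OF H0 le0] count_upto_def using H0 by fastforce
    ultimately show ?thesis
      unfolding T using q last_pass_ratio_nonneg[of K ?P H0 u] by simp
  next
    assume pass: "?T \<in> K \<and> ?P ?T (count_upto H0 u ?T) (count_false_upto H0 u ?T)"
    then have "?T \<le> N" using K by auto
    have "real (count_upto H0 u ?T) / D (count_upto H0 u ?T + count_upto ({1..N} - H0) t ?T)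
        \<le> q * (real (count_upto H0 u ?T) / (1 + real (count_false_upto H0 u ?T)))"
      by (rule fdp_le[where b'="count_false_upto ({1..N} - H0) t ?T"])
         (use pass in \<open>simp add: khat_null_test_def\<close>)
    then show ?thesis
      unfolding T unfolding x_def counts_pattern_point[OF H0 \<open>?T \<le> N\<close>] last_pass_ratio_def .
  qed
qed

lemma sum_Bernoulli_le_of_le_last_pass_ratio:
  fixes \<rho> :: real
  assumes H0: "H0 \<subseteq> {1..N}" and K: "K \<subseteq> {1..N}" and q: "0 < q" and \<rho>: "0 \<le> \<rho>" "\<rho> \<le> 1/2"
    and F: "\<And>u. F u \<le> q * last_pass_ratio K P H0 u"
  shows "(\<Sum>u\<in>Pi\<^sub>E H0 (\<lambda>_. UNIV). (\<Prod>l\<in>H0. if u l then \<rho> else 1 - \<rho>) * F u) \<le> q"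
proof -
  have fin: "finite H0" "finite K" and pos: "\<forall>l\<in>H0. 0 < l" using H0 K finite_subset by auto
  have "(\<Sum>u\<in>Pi\<^sub>E H0 (\<lambda>_. UNIV). (\<Prod>l\<in>H0. if u l then \<rho> else 1 - \<rho>) * F u)
      \<le> (\<Sum>u\<in>Pi\<^sub>E H0 (\<lambda>_. UNIV).
            (\<Prod>l\<in>H0. if u l then \<rho> else 1 - \<rho>) * (q * last_pass_ratio K P H0 u))"
    using F \<rho> by (intro sum_mono mult_left_mono prod_nonneg) auto
  also have "\<dots> = q * (\<Sum>u\<in>Pi\<^sub>E H0 (\<lambda>_. UNIV).
            (\<Prod>l\<in>H0. if u l then \<rho> else 1 - \<rho>) * last_pass_ratio K P H0 u)"
    by (simp add: sum_distrib_left algebra_simps)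
  also have "\<dots> \<le> q * 1"
    using sum_Bernoulli_last_pass_ratio_le_1[OF fin pos \<rho>, of P] q by (intro mult_left_mono) auto
  finally show ?thesis by simp
qed

lemma sum_Bernoulli_fdp_le:
  fixes \<rho> :: real and t :: "nat \<Rightarrow> bool"
  assumes H0: "H0 \<subseteq> {1..N}" and K: "K \<subseteq> {1..N}" and q: "0 < q" and \<rho>: "0 \<le> \<rho>" "\<rho> \<le> 1/2"
  defines "x \<equiv> \<lambda>u. pattern_point H0 u t"
  shows "(\<Sum>u\<in>Pi\<^sub>E H0 (\<lambda>_. UNIV). (\<Prod>l\<in>H0. if u l then \<rho> else 1 - \<rho>) *
          (real (Vcnt H0 (x u) (khat 0 K q (x u))) / (real (n_le (x u) (khat 0 K q (x u))) + 1 / q)))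
         \<le> q"
  unfolding x_def
  by (rule sum_Bernoulli_le_of_le_last_pass_ratio[OF H0 K q \<rho>],
      rule fdp_pattern_point_le_last_pass_ratio[OF H0 K q, where c=0])
     (use q fdp_le_null_ratio[OF q] in auto)

lemma sum_Bernoulli_fdp_plus_le:
  fixes \<rho> :: real and t :: "nat \<Rightarrow> bool"
  assumes H0: "H0 \<subseteq> {1..N}" and K: "K \<subseteq> {1..N}" and q: "0 < q" and \<rho>: "0 \<le> \<rho>" "\<rho> \<le> 1/2"
  defines "x \<equiv> \<lambda>u. pattern_point H0 u t"
  shows "(\<Sum>u\<in>Pi\<^sub>E H0 (\<lambda>_. UNIV). (\<Prod>l\<in>H0. if u l then \<rho> else 1 - \<rho>) *
          (real (Vcnt H0 (x u) (khat 1 K q (x u))) / real (max (n_le (x u) (khat 1 K q (x u))) 1)))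
         \<le> q"
  unfolding x_def
  by (rule sum_Bernoulli_le_of_le_last_pass_ratio[OF H0 K q \<rho>],
      rule fdp_pattern_point_le_last_pass_ratio[OF H0 K q, where c=1])
     (use fdp_plus_le_null_ratio[OF q] in auto)

lemma counts_eq_of_same_pattern:
  assumes "\<And>l. l \<in> {1..N} \<Longrightarrow> (x l \<le> 1/2) = (y l \<le> (1/2::real))" "k \<le> N"
  shows "n_le x k = n_le y k" "n_gt x k = n_gt y k" "Vcnt H0 x k = Vcnt H0 y k"
proof -
  have "{l\<in>{1..k}. x l \<le> 1/2} = {l\<in>{1..k}. y l \<le> 1/2}" using assms by auto
  then show "n_le x k = n_le y k" unfolding n_le_def by simp
  have "{l\<in>{1..k}. x l > 1/2} = {l\<in>{1..k}. y l > 1/2}" using assms by (auto simp: not_le[symmetric])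
  then show "n_gt x k = n_gt y k" unfolding n_gt_def by simp
  have "{l\<in>{1..k}. l \<in> H0 \<and> x l \<le> 1/2} = {l\<in>{1..k}. l \<in> H0 \<and> y l \<le> 1/2}" using assms by auto
  then show "Vcnt H0 x k = Vcnt H0 y k" unfolding Vcnt_def by simp
qed

lemma khat_le_N:
  assumes "K \<subseteq> {1..N}"
  shows "khat c K q x \<le> N"
proof -
  have "finite K" using assms finite_subset by blast
  then have "khat c K q x \<in> {0} \<union> {k \<in> K. (c + real (n_gt x k)) / real (max (n_le x k) 1) \<le> q}"
    unfolding khat_def by (intro Max_in) auto
  then show ?thesis using assms by auto
qed

lemma khat_eq_of_same_pattern:
  assumes "\<And>l. l \<in> {1..N} \<Longrightarrow> (x l \<le> 1/2) = (y l \<le> (1/2::real))" "K \<subseteq> {1..N}"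
  shows "khat c K q x = khat c K q y"
proof -
  have "{k \<in> K. (c + real (n_gt x k)) / real (max (n_le x k) 1) \<le> q}
      = {k \<in> K. (c + real (n_gt y k)) / real (max (n_le y k) 1) \<le> q}"
    using counts_eq_of_same_pattern[OF assms(1)] assms(2) by (intro Collect_cong) auto
  then show ?thesis unfolding khat_def by simp
qed

lemma fdp_eq_of_same_pattern:
  assumes "\<And>l. l \<in> {1..N} \<Longrightarrow> (x l \<le> 1/2) = (y l \<le> (1/2::real))" "K \<subseteq> {1..N}"
  shows "real (Vcnt H0 x (khat c K q x)) / (real (n_le x (khat c K q x)) + 1 / q)
       = real (Vcnt H0 y (khat c K q y)) / (real (n_le y (khat c K q y)) + 1 / q)"
    "real (Vcnt H0 x (khat c K q x)) / real (max (n_le x (khat c K q x)) 1)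
       = real (Vcnt H0 y (khat c K q y)) / real (max (n_le y (khat c K q y)) 1)"
  using khat_eq_of_same_pattern[OF assms] counts_eq_of_same_pattern[OF assms(1) khat_le_N[OF assms(2)]]
  by simp_all

definition half_pattern_cell ::
    "'a measure \<Rightarrow> (nat \<Rightarrow> 'a \<Rightarrow> real) \<Rightarrow> nat set \<Rightarrow> (nat \<Rightarrow> bool) \<Rightarrow> 'a set" where
  "half_pattern_cell M p H u = {\<omega>\<in>space M. \<forall>l\<in>H. (p l \<omega> \<le> 1/2) = u l}"

lemma mem_half_pattern_cell_iff:
  assumes "u \<in> Pi\<^sub>E H (\<lambda>_. UNIV)" "\<omega> \<in> space M"
  shows "\<omega> \<in> half_pattern_cell M p H u \<longleftrightarrow> u = restrict (\<lambda>l. p l \<omega> \<le> 1/2) H"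
  using assms by (auto simp: half_pattern_cell_def PiE_iff extensional_def fun_eq_iff)

context prob_space
begin

lemma half_pattern_cell_event:
  assumes "finite H" "\<And>l. l \<in> H \<Longrightarrow> p l \<in> borel_measurable M"
  shows "half_pattern_cell M p H u \<in> events"
  unfolding half_pattern_cell_def using assms by measurable

lemma sum_prob_half_pattern_cell_le_1:
  assumes "finite H" "\<And>l. l \<in> H \<Longrightarrow> p l \<in> borel_measurable M"
  shows "(\<Sum>t\<in>Pi\<^sub>E H (\<lambda>_. UNIV::bool set). prob (half_pattern_cell M p H t)) \<le> 1"
proof -
  have "disjoint_family_on (half_pattern_cell M p H) (Pi\<^sub>E H (\<lambda>_. UNIV::bool set))"
    unfolding disjoint_family_on_def
  proof (intro ballI impI)
    fix t t' :: "nat \<Rightarrow> bool"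
    assume t: "t \<in> Pi\<^sub>E H (\<lambda>_. UNIV)" and t': "t' \<in> Pi\<^sub>E H (\<lambda>_. UNIV)" and "t \<noteq> t'"
    show "half_pattern_cell M p H t \<inter> half_pattern_cell M p H t' = {}"
    proof (rule equals0I)
      fix \<omega> assume \<omega>: "\<omega> \<in> half_pattern_cell M p H t \<inter> half_pattern_cell M p H t'"
      then have "\<omega> \<in> space M" by (simp add: half_pattern_cell_def)
      then show False
        using \<omega> \<open>t \<noteq> t'\<close> mem_half_pattern_cell_iff[OF t, of \<omega> M p] mem_half_pattern_cell_iff[OF t', of \<omega> M p]
        by auto
    qed
  qed
  then have "prob (\<Union>t\<in>Pi\<^sub>E H (\<lambda>_. UNIV). half_pattern_cell M p H t)
      = (\<Sum>t\<in>Pi\<^sub>E H (\<lambda>_. UNIV). prob (half_pattern_cell M p H t))"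
    using assms half_pattern_cell_event by (intro finite_measure_finite_Union) (auto intro: finite_PiE)
  then show ?thesis by (metis prob_le_1)
qed

lemma prob_half_pattern_cell_indep:
  assumes indep: "indep_vars (\<lambda>_. borel) p H" and "finite H"
    and \<rho>: "\<And>l. l \<in> H \<Longrightarrow> prob {\<omega>\<in>space M. p l \<omega> \<le> 1/2} = \<rho>"
  shows "prob (half_pattern_cell M p H u) = (\<Prod>l\<in>H. if u l then \<rho> else 1 - \<rho>)"
proof (cases "H = {}")
  case True
  then show ?thesis by (simp add: half_pattern_cell_def prob_space)
next
  case False
  have [measurable]: "p l \<in> borel_measurable M" if "l \<in> H" for l
    using indep that by (auto simp: indep_vars_def measurable_def)
  define A where "A l = {x::real. (x \<le> 1/2) = u l}" for l
  have A: "A l \<in> sets borel" for l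
    by (cases "u l") (auto simp: A_def not_le[symmetric] atMost_def[symmetric] greaterThan_def[symmetric])
  have "prob (half_pattern_cell M p H u) = prob (\<Inter>l\<in>H. p l -` A l \<inter> space M)"
    using False by (auto simp: half_pattern_cell_def A_def intro!: arg_cong[where f=prob])
  also have "\<dots> = (\<Prod>l\<in>H. prob (p l -` A l \<inter> space M))"
    using A by (intro indep_varsD[OF indep False \<open>finite H\<close>]) auto
  also have "\<dots> = (\<Prod>l\<in>H. if u l then \<rho> else 1 - \<rho>)"
  proof (intro prod.cong refl)
    fix l assume l: "l \<in> H"
    have "{\<omega>\<in>space M. p l \<omega> \<le> 1/2} \<in> events" using l by measurable
    moreover have "p l -` A l \<inter> space M =
        (if u l then {\<omega>\<in>space M. p l \<omega> \<le> 1/2} else space M - {\<omega>\<in>space M. p l \<omega> \<le> 1/2})"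
      by (auto simp: A_def)
    ultimately show "prob (p l -` A l \<inter> space M) = (if u l then \<rho> else 1 - \<rho>)"
      using \<rho>[OF l] prob_compl by auto
  qed
  finally show ?thesis .
qed

lemma prob_half_pattern_cell_Int_indep:
  assumes indep: "indep_var (Pi\<^sub>M H (\<lambda>_. borel)) (\<lambda>\<omega>. restrict (\<lambda>l. p l \<omega>) H)
      (Pi\<^sub>M R (\<lambda>_. borel)) (\<lambda>\<omega>. restrict (\<lambda>l. p l \<omega>) R)"
    and "finite H" "finite R"
  shows "prob (half_pattern_cell M p H u \<inter> half_pattern_cell M p R t)
       = prob (half_pattern_cell M p H u) * prob (half_pattern_cell M p R t)"
proof -
  define X where "X S v = {y\<in>space (Pi\<^sub>M S (\<lambda>_. borel)). \<forall>l\<in>S. (y l \<le> (1/2::real)) = v l}"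
    for S :: "nat set" and v :: "nat \<Rightarrow> bool"
  have "X S v \<in> sets (Pi\<^sub>M S (\<lambda>_. borel))" if "finite S" for S v
    unfolding X_def using that by measurable
  then have "prob ((\<lambda>\<omega>. (restrict (\<lambda>l. p l \<omega>) H, restrict (\<lambda>l. p l \<omega>) R)) -` (X H u \<times> X R t) \<inter> space M)
    = prob ((\<lambda>\<omega>. restrict (\<lambda>l. p l \<omega>) H) -` X H u \<inter> space M) * prob ((\<lambda>\<omega>. restrict (\<lambda>l. p l \<omega>) R) -` X R t \<inter> space M)"
    using assms by (intro indep_varD[OF indep]) auto
  moreover have "(\<lambda>\<omega>. restrict (\<lambda>l. p l \<omega>) S) -` X S v \<inter> space M = half_pattern_cell M p S v" for S v
    unfolding X_def half_pattern_cell_def by (auto simp: space_PiM)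
  moreover have "(\<lambda>\<omega>. (restrict (\<lambda>l. p l \<omega>) H, restrict (\<lambda>l. p l \<omega>) R)) -` (X H u \<times> X R t) \<inter> space M
      = half_pattern_cell M p H u \<inter> half_pattern_cell M p R t"
    unfolding X_def half_pattern_cell_def by (auto simp: space_PiM)
  ultimately show ?thesis by simp
qed

lemma integral_eq_sum_half_pattern_cells:
  fixes \<Phi> :: "(nat \<Rightarrow> real) \<Rightarrow> real"
  assumes H0: "H0 \<subseteq> {1..N}"
    and rv: "\<And>l. l \<in> {1..N} \<Longrightarrow> p l \<in> borel_measurable M"
    and inv: "\<And>x y. (\<And>l. l \<in> {1..N} \<Longrightarrow> (x l \<le> 1/2) = (y l \<le> (1/2::real))) \<Longrightarrow> \<Phi> x = \<Phi> y"
  defines "R \<equiv> {1..N} - H0"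
  shows "integral\<^sup>L M (\<lambda>\<omega>. \<Phi> (\<lambda>l. p l \<omega>)) =
    (\<Sum>u\<in>Pi\<^sub>E H0 (\<lambda>_. UNIV). \<Sum>t\<in>Pi\<^sub>E R (\<lambda>_. UNIV).
       \<Phi> (pattern_point H0 u t) * prob (half_pattern_cell M p H0 u \<inter> half_pattern_cell M p R t))"
proof -
  define U where "U = Pi\<^sub>E H0 (\<lambda>_. UNIV::bool set)"
  define T where "T = Pi\<^sub>E R (\<lambda>_. UNIV::bool set)"
  define C where "C u t = half_pattern_cell M p H0 u \<inter> half_pattern_cell M p R t" for u t
  have "finite H0" "finite R" using H0 finite_subset unfolding R_def by auto
  then have fin: "finite H0" "finite R" "finite U" "finite T"
    unfolding U_def T_def by (auto intro: finite_PiE)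
  have C: "C u t \<in> events" for u t
    unfolding C_def using fin rv H0 by (intro sets.Int half_pattern_cell_event) (auto simp: R_def)
  have pointwise: "\<Phi> (\<lambda>l. p l \<omega>) = (\<Sum>u\<in>U. \<Sum>t\<in>T. \<Phi> (pattern_point H0 u t) * indicator (C u t) \<omega>)"
    if \<omega>: "\<omega> \<in> space M" for \<omega>
  proof -
    define u0 where "u0 = restrict (\<lambda>l. p l \<omega> \<le> 1/2) H0"
    define t0 where "t0 = restrict (\<lambda>l. p l \<omega> \<le> 1/2) R"
    have u0: "u0 \<in> U" and t0: "t0 \<in> T" unfolding u0_def t0_def U_def T_def by auto
    have "indicator (C u t) \<omega> = (if u = u0 \<and> t = t0 then 1 else (0::real))" if "u \<in> U" "t \<in> T" for u t
      using that \<omega> mem_half_pattern_cell_iff[of u H0 \<omega> M p] mem_half_pattern_cell_iff[of t R \<omega> M p]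
      unfolding C_def u0_def t0_def U_def T_def by (auto simp: indicator_def)
    then have "(\<Sum>u\<in>U. \<Sum>t\<in>T. \<Phi> (pattern_point H0 u t) * indicator (C u t) \<omega>)
        = (\<Sum>u\<in>U. \<Sum>t\<in>T. if u = u0 \<and> t = t0 then \<Phi> (pattern_point H0 u t) else 0)"
      by (intro sum.cong refl) simp
    also have "\<dots> = (\<Sum>u\<in>U. if u = u0 then \<Phi> (pattern_point H0 u t0) else 0)"
      by (intro sum.cong refl) (cases "u = u0", simp_all add: sum.delta t0 fin)
    also have "\<dots> = \<Phi> (pattern_point H0 u0 t0)"
      by (simp add: sum.delta u0 fin)
    also have "\<dots> = \<Phi> (\<lambda>l. p l \<omega>)"
      by (rule inv) (unfold pattern_point_le_half, auto simp: u0_def t0_def R_def)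
    finally show ?thesis by simp
  qed
  have "integral\<^sup>L M (\<lambda>\<omega>. \<Phi> (\<lambda>l. p l \<omega>))
      = integral\<^sup>L M (\<lambda>\<omega>. \<Sum>u\<in>U. \<Sum>t\<in>T. \<Phi> (pattern_point H0 u t) * indicator (C u t) \<omega>)"
    using pointwise by (intro Bochner_Integration.integral_cong) auto
  also have "\<dots> = (\<Sum>u\<in>U. \<Sum>t\<in>T. \<Phi> (pattern_point H0 u t) * prob (C u t))"
  proof -
    have int: "integrable M (\<lambda>\<omega>. \<Phi> (pattern_point H0 u t) * indicator (C u t) \<omega>)" for u t
      using C[of u t]
      by (intro integrable_mult_right integrable_real_indicator) (auto simp: less_top[symmetric])
    have "integral\<^sup>L M (\<lambda>\<omega>. \<Sum>u\<in>U. \<Sum>t\<in>T. \<Phi> (pattern_point H0 u t) * indicator (C u t) \<omega>)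
        = (\<Sum>u\<in>U. \<Sum>t\<in>T. integral\<^sup>L M (\<lambda>\<omega>. \<Phi> (pattern_point H0 u t) * indicator (C u t) \<omega>))"
      using int by (simp add: Bochner_Integration.integral_sum integrable_sum)
    then show ?thesis using C by simp
  qed
  finally show ?thesis unfolding U_def T_def C_def .
qed

lemma expectation_le_of_half_pattern_bound:
  fixes p :: "nat \<Rightarrow> 'a \<Rightarrow> real" and \<Phi> :: "(nat \<Rightarrow> real) \<Rightarrow> real"
  assumes rv: "\<And>l. l \<in> {1..N} \<Longrightarrow> p l \<in> borel_measurable M"
    and H0: "H0 \<subseteq> {1..N}"
    and indep_null: "indep_vars (\<lambda>_. borel) p H0"
    and indep_nonnull: "indep_var (Pi\<^sub>M H0 (\<lambda>_. borel)) (\<lambda>\<omega>. restrict (\<lambda>l. p l \<omega>) H0)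
          (Pi\<^sub>M ({1..N} - H0) (\<lambda>_. borel)) (\<lambda>\<omega>. restrict (\<lambda>l. p l \<omega>) ({1..N} - H0))"
    and \<rho>: "\<And>l. l \<in> H0 \<Longrightarrow> prob {\<omega>\<in>space M. p l \<omega> \<le> 1/2} = \<rho>"
    and inv: "\<And>x y. (\<And>l. l \<in> {1..N} \<Longrightarrow> (x l \<le> 1/2) = (y l \<le> (1/2::real))) \<Longrightarrow> \<Phi> x = \<Phi> y"
    and bound: "\<And>t. (\<Sum>u\<in>Pi\<^sub>E H0 (\<lambda>_. UNIV). (\<Prod>l\<in>H0. if u l then \<rho> else 1 - \<rho>) * \<Phi> (pattern_point H0 u t)) \<le> q"
    and "0 \<le> q"
  shows "integral\<^sup>L M (\<lambda>\<omega>. \<Phi> (\<lambda>l. p l \<omega>)) \<le> q"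
proof -
  define R where "R = {1..N} - H0"
  define w where "w u = (\<Prod>l\<in>H0. if u l then \<rho> else 1 - \<rho>)" for u
  have fin: "finite H0" "finite R" using H0 finite_subset unfolding R_def by auto
  have "integral\<^sup>L M (\<lambda>\<omega>. \<Phi> (\<lambda>l. p l \<omega>))
      = (\<Sum>u\<in>Pi\<^sub>E H0 (\<lambda>_. UNIV). \<Sum>t\<in>Pi\<^sub>E R (\<lambda>_. UNIV).
          \<Phi> (pattern_point H0 u t) * prob (half_pattern_cell M p H0 u \<inter> half_pattern_cell M p R t))"
    unfolding R_def by (rule integral_eq_sum_half_pattern_cells[OF H0 rv inv])
  also have "\<dots> = (\<Sum>u\<in>Pi\<^sub>E H0 (\<lambda>_. UNIV). \<Sum>t\<in>Pi\<^sub>E R (\<lambda>_. UNIV).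
          \<Phi> (pattern_point H0 u t) * (w u * prob (half_pattern_cell M p R t)))"
    unfolding w_def
    using prob_half_pattern_cell_Int_indep[OF indep_nonnull[folded R_def] fin]
      prob_half_pattern_cell_indep[OF indep_null fin(1) \<rho>]
    by simp
  also have "\<dots> = (\<Sum>t\<in>Pi\<^sub>E R (\<lambda>_. UNIV). prob (half_pattern_cell M p R t) *
                    (\<Sum>u\<in>Pi\<^sub>E H0 (\<lambda>_. UNIV). w u * \<Phi> (pattern_point H0 u t)))"
    by (subst sum.swap) (simp add: sum_distrib_left algebra_simps)
  also have "\<dots> \<le> (\<Sum>t\<in>Pi\<^sub>E R (\<lambda>_. UNIV). prob (half_pattern_cell M p R t) * q)"
    using bound unfolding w_def by (intro sum_mono mult_left_mono) auto
  also have "\<dots> \<le> 1 * q"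
    unfolding sum_distrib_right[symmetric] using \<open>0 \<le> q\<close> fin rv
    by (intro mult_right_mono sum_prob_half_pattern_cell_le_1) (auto simp: R_def)
  finally show ?thesis by simp
qed

lemma null_prob_le_half_common:
  fixes p :: "nat \<Rightarrow> 'a \<Rightarrow> real"
  assumes rv: "\<And>l. l \<in> H0 \<Longrightarrow> p l \<in> borel_measurable M"
    and ident: "\<And>l l'. l \<in> H0 \<Longrightarrow> l' \<in> H0 \<Longrightarrow> distr M borel (p l) = distr M borel (p l')"
    and superunif: "\<And>l. l \<in> H0 \<Longrightarrow> prob {\<omega> \<in> space M. p l \<omega> \<le> 1/2} \<le> 1/2"
  obtains \<rho> where "0 \<le> \<rho>" "\<rho> \<le> 1/2" "\<And>l. l \<in> H0 \<Longrightarrow> prob {\<omega>\<in>space M. p l \<omega> \<le> 1/2} = \<rho>"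
proof (cases "H0 = {}")
  case False
  then obtain l0 where l0: "l0 \<in> H0" by blast
  have "prob {\<omega>\<in>space M. p l \<omega> \<le> 1/2} = measure (distr M borel (p l)) {..1/2}" if "l \<in> H0" for l
  proof -
    have "p l -` {..1/2} \<inter> space M = {\<omega>\<in>space M. p l \<omega> \<le> 1/2}" by auto
    then show ?thesis using measure_distr[OF rv[OF that], of "{..1/2}"] by simp
  qed
  then have "prob {\<omega>\<in>space M. p l \<omega> \<le> 1/2} = prob {\<omega>\<in>space M. p l0 \<omega> \<le> 1/2}" if "l \<in> H0" for l
    using ident[OF that l0] that l0 by simp
  then show ?thesis
    using superunif[OF l0] by (intro that[of "prob {\<omega>\<in>space M. p l0 \<omega> \<le> 1/2}"]) auto
qed (use that[of 0] in auto)

end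

theorem lemma4:
  fixes M :: "'a measure" and N :: nat and p :: "nat \<Rightarrow> 'a \<Rightarrow> real"
    and H0 :: "nat set" and K :: "nat set" and q :: real
  assumes "prob_space M"
    and rv: "\<And>l. l \<in> {1..N} \<Longrightarrow> p l \<in> borel_measurable M"
    and H0: "H0 \<subseteq> {1..N}"
    and ident: "\<And>l l'. l \<in> H0 \<Longrightarrow> l' \<in> H0 \<Longrightarrow> distr M borel (p l) = distr M borel (p l')"
    and indep_null: "prob_space.indep_vars M (\<lambda>_. borel) p H0"
    and indep_nonnull: "prob_space.indep_var M
          (Pi\<^sub>M H0 (\<lambda>_. borel)) (\<lambda>\<omega>. restrict (\<lambda>l. p l \<omega>) H0)
          (Pi\<^sub>M ({1..N} - H0) (\<lambda>_. borel)) (\<lambda>\<omega>. restrict (\<lambda>l. p l \<omega>) ({1..N} - H0))"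
    and superunif: "\<And>l u. l \<in> H0 \<Longrightarrow> 0 \<le> u \<Longrightarrow> u \<le> 1 \<Longrightarrow>
          measure M {\<omega> \<in> space M. p l \<omega> \<le> u} \<le> u"
    and q: "0 < q" "q \<le> 1"
    and K: "K \<subseteq> {1..N}"
  shows "integral\<^sup>L M (\<lambda>\<omega>. real (Vcnt H0 (\<lambda>l. p l \<omega>) (khat 0 K q (\<lambda>l. p l \<omega>)))
             / (real (n_le (\<lambda>l. p l \<omega>) (khat 0 K q (\<lambda>l. p l \<omega>))) + 1 / q)) \<le> q
       \<and> integral\<^sup>L M (\<lambda>\<omega>. real (Vcnt H0 (\<lambda>l. p l \<omega>) (khat 1 K q (\<lambda>l. p l \<omega>)))
             / real (max (n_le (\<lambda>l. p l \<omega>) (khat 1 K q (\<lambda>l. p l \<omega>))) 1)) \<le> q"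
proof -
  interpret prob_space M by fact
  have "p l \<in> borel_measurable M" if "l \<in> H0" for l
    using rv H0 that by auto
  moreover have "prob {\<omega>\<in>space M. p l \<omega> \<le> 1/2} \<le> 1/2" if "l \<in> H0" for l
    using superunif[OF that, of "1/2"] by simp
  ultimately obtain \<rho> where \<rho>: "0 \<le> \<rho>" "\<rho> \<le> 1/2" "\<And>l. l \<in> H0 \<Longrightarrow> prob {\<omega>\<in>space M. p l \<omega> \<le> 1/2} = \<rho>"
    using null_prob_le_half_common[of H0 p] ident by blast
  show ?thesis
  proof
    show "integral\<^sup>L M (\<lambda>\<omega>. real (Vcnt H0 (\<lambda>l. p l \<omega>) (khat 0 K q (\<lambda>l. p l \<omega>)))
             / (real (n_le (\<lambda>l. p l \<omega>) (khat 0 K q (\<lambda>l. p l \<omega>))) + 1 / q)) \<le> q"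
      by (rule expectation_le_of_half_pattern_bound[OF rv H0 indep_null indep_nonnull \<rho>(3),
            where \<Phi>="\<lambda>x. real (Vcnt H0 x (khat 0 K q x)) / (real (n_le x (khat 0 K q x)) + 1 / q)"])
        (assumption | rule fdp_eq_of_same_pattern(1)[OF _ K] sum_Bernoulli_fdp_le[OF H0 K q(1) \<rho>(1,2)]
          | use q in simp)+
    show "integral\<^sup>L M (\<lambda>\<omega>. real (Vcnt H0 (\<lambda>l. p l \<omega>) (khat 1 K q (\<lambda>l. p l \<omega>)))
             / real (max (n_le (\<lambda>l. p l \<omega>) (khat 1 K q (\<lambda>l. p l \<omega>))) 1)) \<le> q"
      by (rule expectation_le_of_half_pattern_bound[OF rv H0 indep_null indep_nonnull \<rho>(3),
            where \<Phi>="\<lambda>x. real (Vcnt H0 x (khat 1 K q x)) / real (max (n_le x (khat 1 K q x)) 1)"])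
        (assumption | rule fdp_eq_of_same_pattern(2)[OF _ K] sum_Bernoulli_fdp_plus_le[OF H0 K q(1) \<rho>(1,2)]
          | use q in simp)+
  qed
qed

end
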